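(* Let $G_0=\mathrm{Aut}(\tilde{\mathbf O})$ (the split real form of $G_2$), acting on $\mathrm{Im}\,\tilde{\mathbf O}=(\mathbb R\cdot1)^\perp\cong\mathbb R^{3,4}$ and hence complex-linearly on $(\mathrm{Im}\,\tilde{\mathbf O})_{\mathbb C}\cong\mathbb C^7$. Let $Z$ be the quadric of isotropic lines in $(\mathrm{Im}\,\tilde{\mathbf O})_{\mathbb C}$ for the complex-bilinear extension $(\cdot,\cdot)_{\mathbb C}$ of the norm form, and let $D_+$ (resp. $D_-$) be the set of lines $\mathbb C z\in Z$ with $\langle z,z\rangle>0$ (resp. $<0$), where $\langle w,z\rangle=(w,\bar z)_{\mathbb C}$. Then $D_\pm$ are the two open $SO_e(3,4)$-orbits in $Z$, and $G_0$ acts transitively on each of $D_+$ and $D_-$.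
   Context: $\tilde{\mathbf O}$ is the split octonion algebra over $\mathbb R$ with norm form whose polarization $(\cdot,\cdot)$ has signature $(4,4)$ and $(1,1)=1$; automorphisms preserve $(\cdot,\cdot)$ and $\mathrm{Im}\,\tilde{\mathbf O}$, giving $G_0\subset SO_e(3,4)$. Bar denotes complex conjugation of $(\mathrm{Im}\,\tilde{\mathbf O})_{\mathbb C}=\mathrm{Im}\,\tilde{\mathbf O}+i\,\mathrm{Im}\,\tilde{\mathbf O}$. *)

theory Defs
  imports "HOL-Analysis.Analysis"
begin

type_synonym quat = "real \<times> real \<times> real \<times> real"
type_synonym soct = "quat \<times> quat"

fun qmult :: "quat \<Rightarrow> quat \<Rightarrow> quat" where
  "qmult (a0,a1,a2,a3) (b0,b1,b2,b3) =
     (a0*b0 - a1*b1 - a2*b2 - a3*b3,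
      a0*b1 + a1*b0 + a2*b3 - a3*b2,
      a0*b2 - a1*b3 + a2*b0 + a3*b1,
      a0*b3 + a1*b2 - a2*b1 + a3*b0)"

fun qconj :: "quat \<Rightarrow> quat" where
  "qconj (a0,a1,a2,a3) = (a0, -a1, -a2, -a3)"

text \<open>Split octonions via Cayley-Dickson doubling of the quaternions with
  parameter +1: (a,b)(c,d) = (ac + conj(d) b, da + b conj(c)).\<close>
fun omult :: "soct \<Rightarrow> soct \<Rightarrow> soct" where
  "omult (a,b) (c,d) = (qmult a c + qmult (qconj d) b, qmult d a + qmult b (qconj c))"

definition one_o :: soct where "one_o = ((1,0,0,0),(0,0,0,0))"

text \<open>Norm form N(a,b) = |a|^2 - |b|^2 (= x * conj x), signature (4,4).\<close>
definition onorm :: "soct \<Rightarrow> real" where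
  "onorm x = (fst x \<bullet> fst x) - (snd x \<bullet> snd x)"

definition B :: "soct \<Rightarrow> soct \<Rightarrow> real" where
  "B x y = (onorm (x + y) - onorm x - onorm y) / 2"

definition ImO :: "soct set" where "ImO = {x. B x one_o = 0}"

text \<open>Complexification of Im O: a pair (u,v) stands for u + i v.\<close>
definition ImC :: "(soct \<times> soct) set" where
  "ImC = {(u,v). u \<in> ImO \<and> v \<in> ImO}"

definition cscale :: "complex \<Rightarrow> soct \<times> soct \<Rightarrow> soct \<times> soct" where
  "cscale c z = (Re c *\<^sub>R fst z - Im c *\<^sub>R snd z, Re c *\<^sub>R snd z + Im c *\<^sub>R fst z)"

definition bilC :: "soct \<times> soct \<Rightarrow> soct \<times> soct \<Rightarrow> complex" where
  "bilC w z = Complex (B (fst w) (fst z) - B (snd w) (snd z))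
                      (B (fst w) (snd z) + B (snd w) (fst z))"

definition conjC :: "soct \<times> soct \<Rightarrow> soct \<times> soct" where
  "conjC z = (fst z, - snd z)"

definition herm :: "soct \<times> soct \<Rightarrow> soct \<times> soct \<Rightarrow> complex" where
  "herm w z = bilC w (conjC z)"

definition cline :: "soct \<times> soct \<Rightarrow> (soct \<times> soct) set" where
  "cline z = range (\<lambda>c. cscale c z)"

definition isocone :: "(soct \<times> soct) set" where
  "isocone = {z \<in> ImC. z \<noteq> 0 \<and> bilC z z = 0}"

definition Zq :: "(soct \<times> soct) set set" where
  "Zq = cline ` isocone"

definition Dplus :: "(soct \<times> soct) set set" where
  "Dplus = {cline z | z. z \<in> isocone \<and> Re (herm z z) > 0}"

definition Dminus :: "(soct \<times> soct) set set" where
  "Dminus = {cline z | z. z \<in> isocone \<and> Re (herm z z) < 0}"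

definition openZ :: "(soct \<times> soct) set set \<Rightarrow> bool" where
  "openZ U \<longleftrightarrow> U \<subseteq> Zq \<and> openin (top_of_set isocone) {z \<in> isocone. cline z \<in> U}"

text \<open>O(Im O) realized as B-isometries of O fixing 1 (equivalently, of Im O);
  SO_e(3,4) is its identity component (pointwise = norm topology).\<close>
definition Ogrp :: "(soct \<Rightarrow> soct) set" where
  "Ogrp = {g. linear g \<and> bij g \<and> g one_o = one_o \<and> (\<forall>x y. B (g x) (g y) = B x y)}"

definition SOe :: "(soct \<Rightarrow> soct) set" where
  "SOe = path_component_set Ogrp id"

definition G0 :: "(soct \<Rightarrow> soct) set" where
  "G0 = {g. linear g \<and> bij g \<and> (\<forall>x y. g (omult x y) = omult (g x) (g y))}"

definition actL :: "(soct \<Rightarrow> soct) \<Rightarrow> (soct \<times> soct) set \<Rightarrow> (soct \<times> soct) set" where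
  "actL g L = (\<lambda>z. (g (fst z), g (snd z))) ` L"

definition orbit :: "(soct \<Rightarrow> soct) set \<Rightarrow> (soct \<times> soct) set \<Rightarrow> (soct \<times> soct) set set" where
  "orbit H L = {actL g L | g. g \<in> H}"

definition orbitsZ :: "(soct \<Rightarrow> soct) set \<Rightarrow> (soct \<times> soct) set set set" where
  "orbitsZ H = orbit H ` Zq"

end

theory Submission
  imports Defs
begin

text \<open>
  Write \<open>z = u + i v\<close>. For an isotropic \<open>z\<close> the real vectors \<open>u, v \<in> Im O\<close> are orthogonal with
  \<open>N(u) = N(v)\<close>, and \<open>\<langle>z,z\<rangle> = 2 N(u)\<close>; rescaling \<open>z\<close> by a complex number multiplies
  \<open>\<langle>z,z\<rangle>\<close> by a positive factor. Hence isometries preserve \<open>D\<^sub>+\<close> and \<open>D\<^sub>-\<close>,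
  and these sets are open in \<open>Z\<close>.

  For transitivity, normalise \<open>N(u) = \<plusminus>1\<close> and move the frame \<open>(u, v)\<close> to a standard one by
  explicit automorphisms: the maps \<open>(a, b) \<mapsto> (p a p\<^sup>*, q b p\<^sup>*)\<close> for unit quaternions
  \<open>p, q\<close>, hyperbolic boosts and a unipotent shear. Each lies on a path through the identity
  inside \<open>G0\<close>, hence in \<open>SOe\<close>, so \<open>D\<^sub>+\<close> and \<open>D\<^sub>-\<close> are single orbits of both groups.

  Every other orbit consists of lines with \<open>\<langle>z,z\<rangle> = 0\<close>, and is not open: an explicit
  curve \<open>u + t\<^sup>2 \<alpha> r + i (v + t p + t\<^sup>2 \<beta> r)\<close> of isotropic vectors through \<open>z\<close> has
  \<open>\<langle>w,w\<rangle> \<noteq> 0\<close> for \<open>t \<noteq> 0\<close>.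
\<close>

section \<open>The norm form\<close>

lemma soct_induct: "(\<And>a0 a1 a2 a3 b0 b1 b2 b3. P ((a0,a1,a2,a3),(b0,b1,b2,b3))) \<Longrightarrow> P x"
  by (metis prod.exhaust)

lemma Pair_eq_0_iff: "(a, b) = 0 \<longleftrightarrow> a = 0 \<and> b = 0"
  by (simp add: zero_prod_def)

lemma B_inner: "B x y = fst x \<bullet> fst y - snd x \<bullet> snd y"
  by (simp add: B_def onorm_def inner_add_left inner_add_right inner_commute field_simps)

lemma onorm_eq_B: "onorm x = B x x"
  by (simp add: B_inner onorm_def)

lemma B_coords: "B ((a0,a1,a2,a3),(b0,b1,b2,b3)) ((c0,c1,c2,c3),(d0,d1,d2,d3)) =
  a0*c0 + a1*c1 + a2*c2 + a3*c3 - b0*d0 - b1*d1 - b2*d2 - b3*d3"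
  by (simp add: B_inner)

lemma onorm_coords: "onorm ((a0,a1,a2,a3),(b0,b1,b2,b3)) =
  a0*a0 + a1*a1 + a2*a2 + a3*a3 - b0*b0 - b1*b1 - b2*b2 - b3*b3"
  by (simp add: onorm_eq_B B_coords)

lemma B_commute: "B x y = B y x"
  by (simp add: B_inner inner_commute)

lemma B_add_left: "B (x + y) z = B x z + B y z"
  and B_add_right: "B z (x + y) = B z x + B z y"
  and B_diff_left: "B (x - y) z = B x z - B y z"
  and B_diff_right: "B z (x - y) = B z x - B z y"
  and B_minus_left: "B (- x) z = - B x z"
  and B_minus_right: "B z (- x) = - B z x"
  and B_scaleR_left: "B (r *\<^sub>R x) z = r * B x z"
  and B_scaleR_right: "B z (r *\<^sub>R x) = r * B z x"
  and B_zero_left: "B 0 z = 0"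
  and B_zero_right: "B z 0 = 0"
  by (simp_all add: B_inner inner_add_left inner_add_right inner_diff_left inner_diff_right algebra_simps)

lemmas B_simps = B_add_left B_add_right B_diff_left B_diff_right B_minus_left B_minus_right
  B_scaleR_left B_scaleR_right B_zero_left B_zero_right

lemma B_one_one: "B one_o one_o = 1"
  by (simp add: one_o_def B_coords)

lemma ImO_iff: "x \<in> ImO \<longleftrightarrow> fst (fst x) = 0"
  by (induct x rule: soct_induct) (simp add: ImO_def one_o_def B_coords)

lemma ImO_add: "x \<in> ImO \<Longrightarrow> y \<in> ImO \<Longrightarrow> x + y \<in> ImO"
  and ImO_diff: "x \<in> ImO \<Longrightarrow> y \<in> ImO \<Longrightarrow> x - y \<in> ImO"
  and ImO_scaleR: "x \<in> ImO \<Longrightarrow> r *\<^sub>R x \<in> ImO"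
  and ImO_minus: "x \<in> ImO \<Longrightarrow> - x \<in> ImO"
  by (simp_all add: ImO_def B_simps)

section \<open>Automorphisms are isometries fixing 1\<close>

lemma omult_one_left: "omult one_o x = x"
  and omult_one_right: "omult x one_o = x"
  by (induct x rule: soct_induct; simp add: one_o_def)+

lemma omult_self: "omult x x = (2 * B x one_o) *\<^sub>R x - onorm x *\<^sub>R one_o"
  by (induct x rule: soct_induct) (simp add: one_o_def onorm_coords B_coords algebra_simps)

lemma onorm_real_plus_ImO: "y \<in> ImO \<Longrightarrow> onorm (a *\<^sub>R one_o + y) = a\<^sup>2 + onorm y"
  by (simp add: onorm_eq_B B_simps ImO_def B_one_one B_commute[of one_o y] power2_eq_square)

lemma G0_linear: "g \<in> G0 \<Longrightarrow> linear g"
  and G0_bij: "g \<in> G0 \<Longrightarrow> bij g"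
  and G0_omult: "g \<in> G0 \<Longrightarrow> g (omult x y) = omult (g x) (g y)"
  unfolding G0_def by blast+

lemma G0_one: assumes "g \<in> G0" shows "g one_o = one_o"
proof -
  obtain y where y: "g y = one_o" using G0_bij[OF assms] by (metis bij_pointE)
  have "g y = g (omult one_o y)" by (simp add: omult_one_left)
  also have "\<dots> = g one_o" using G0_omult[OF assms] by (simp add: y omult_one_right)
  finally show ?thesis using y by simp
qed

lemma G0_real: "g \<in> G0 \<Longrightarrow> g (a *\<^sub>R one_o) = a *\<^sub>R one_o"
  by (simp add: G0_one linear_scale[OF G0_linear])

text \<open>An imaginary x satisfies \<open>x\<^sup>2 = -N(x)\<close>; so does its image y, which forces
  \<open>2 B(y,1) y\<close> to be real. Were \<open>B(y,1) \<noteq> 0\<close>, y and hence x would be real.\<close>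
lemma G0_ImO:
  assumes g: "g \<in> G0" and x: "x \<in> ImO"
  shows "g x \<in> ImO" "onorm (g x) = onorm x"
proof -
  define y where "y = g x"
  define t where "t = B y one_o"
  have x1: "B x one_o = 0" using x by (simp add: ImO_def)
  have "omult y y = g (omult x x)" by (simp add: y_def G0_omult[OF g])
  also have "\<dots> = - onorm x *\<^sub>R one_o"
    using G0_real[OF g, of "- onorm x"] by (simp add: omult_self x1 del: omult.simps)
  finally have ty: "(2 * t) *\<^sub>R y = (onorm y - onorm x) *\<^sub>R one_o"
    using omult_self[of y] by (simp add: t_def algebra_simps)
  have "t = 0"
  proof (rule ccontr)
    assume "t \<noteq> 0"
    then have "y = (1 / (2 * t)) *\<^sub>R ((2 * t) *\<^sub>R y)" by simp
    also have "\<dots> = ((onorm y - onorm x) / (2 * t)) *\<^sub>R one_o" unfolding ty by simp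
    finally have "g x = g (((onorm y - onorm x) / (2 * t)) *\<^sub>R one_o)"
      using G0_real[OF g] y_def by metis
    then obtain a where "g x = g (a *\<^sub>R one_o)" by blast
    then have "x = a *\<^sub>R one_o" using bij_is_inj[OF G0_bij[OF g]] by (simp add: inj_eq)
    then have "y = 0" using x1 by (simp add: y_def B_simps B_one_one linear_0[OF G0_linear[OF g]])
    then show False using \<open>t \<noteq> 0\<close> by (simp add: t_def B_simps)
  qed
  then have "(onorm y - onorm x) *\<^sub>R one_o = 0" using ty by simp
  then show "onorm (g x) = onorm x" by (simp add: y_def one_o_def zero_prod_def)
  show "g x \<in> ImO" using \<open>t = 0\<close> by (simp add: ImO_def y_def t_def)
qed

lemma G0_onorm: assumes g: "g \<in> G0" shows "onorm (g x) = onorm x"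
proof -
  define a where "a = B x one_o"
  define y where "y = x - a *\<^sub>R one_o"
  have y: "y \<in> ImO" by (simp add: ImO_def y_def a_def B_simps B_one_one)
  have "g x = a *\<^sub>R one_o + g y"
    by (simp add: y_def linear_diff[OF G0_linear[OF g]] G0_real[OF g])
  then have "onorm (g x) = a\<^sup>2 + onorm (g y)"
    by (simp add: onorm_real_plus_ImO[OF G0_ImO(1)[OF g y]])
  also have "\<dots> = onorm (a *\<^sub>R one_o + y)"
    by (simp add: G0_ImO(2)[OF g y] onorm_real_plus_ImO[OF y])
  finally show ?thesis by (simp add: y_def)
qed

lemma G0_B: "g \<in> G0 \<Longrightarrow> B (g x) (g y) = B x y"
  by (simp add: B_def G0_onorm linear_add[OF G0_linear, symmetric])

lemma G0_subset_Ogrp: "G0 \<subseteq> Ogrp"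
  using G0_linear G0_bij G0_one G0_B unfolding Ogrp_def by blast

section \<open>Isotropic lines\<close>

lemma cscale_cscale: "cscale c (cscale d z) = cscale (c * d) z"
  by (simp add: cscale_def algebra_simps prod_eq_iff)

lemma cscale_one: "cscale 1 z = z"
  by (simp add: cscale_def)

lemma cscale_zero: "cscale 0 z = 0"
  by (simp add: cscale_def prod_eq_iff)

lemma cscale_of_real: "cscale (complex_of_real r) (u, v) = (r *\<^sub>R u, r *\<^sub>R v)"
  by (simp add: cscale_def)

lemma in_cline: "z \<in> cline z"
  unfolding cline_def by (metis cscale_one rangeI)

lemma cline_cscale: assumes "c \<noteq> 0" shows "cline (cscale c z) = cline z"
proof
  show "cline (cscale c z) \<subseteq> cline z" unfolding cline_def by (auto simp: cscale_cscale)
  have "cscale d z = cscale (d / c) (cscale c z)" for d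
    using assms by (simp add: cscale_cscale)
  then show "cline z \<subseteq> cline (cscale c z)" unfolding cline_def by blast
qed

lemma cline_eqD: "cline z = cline w \<Longrightarrow> \<exists>c. z = cscale c w"
  using in_cline[of z] by (auto simp: cline_def)

lemma herm_self: "herm z z = Complex (onorm (fst z) + onorm (snd z)) 0"
  by (simp add: herm_def bilC_def conjC_def onorm_eq_B B_simps B_commute[of "snd z" "fst z"])

lemma isocone_iff: "z \<in> isocone \<longleftrightarrow> fst z \<in> ImO \<and> snd z \<in> ImO \<and> z \<noteq> 0 \<and>
   onorm (fst z) = onorm (snd z) \<and> B (fst z) (snd z) = 0"
  by (cases z) (auto simp: isocone_def ImC_def bilC_def complex_eq_iff onorm_eq_B B_commute)

lemma Re_herm_cscale: "Re (herm (cscale c z) (cscale c z)) = (cmod c)\<^sup>2 * Re (herm z z)"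
  unfolding cmod_power2 by (simp add: herm_self cscale_def onorm_eq_B B_simps B_commute[of "snd z" "fst z"]
      algebra_simps power2_eq_square)

lemma Re_herm_cline:
  assumes "z \<in> isocone" "cline z = cline w"
  obtains k where "k > 0" "Re (herm z z) = k * Re (herm w w)"
proof -
  obtain c where c: "z = cscale c w" using cline_eqD[OF assms(2)] by blast
  then have "c \<noteq> 0" using assms(1) by (auto simp: isocone_def cscale_zero)
  then show ?thesis using that[of "(cmod c)\<^sup>2"] by (simp add: c Re_herm_cscale)
qed

definition Dsign :: "real \<Rightarrow> (soct \<times> soct) set set" where
  "Dsign \<sigma> = {cline z | z. z \<in> isocone \<and> \<sigma> * Re (herm z z) > 0}"

lemma Dplus_eq_Dsign: "Dplus = Dsign 1"
  and Dminus_eq_Dsign: "Dminus = Dsign (-1)"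
  by (auto simp: Dplus_def Dminus_def Dsign_def)

lemma cline_in_Dsign_iff:
  assumes "z \<in> isocone"
  shows "cline z \<in> Dsign \<sigma> \<longleftrightarrow> \<sigma> * Re (herm z z) > 0"
proof
  assume "cline z \<in> Dsign \<sigma>"
  then obtain w where w: "cline z = cline w" "\<sigma> * Re (herm w w) > 0" by (auto simp: Dsign_def)
  obtain k where k: "k > 0" "Re (herm z z) = k * Re (herm w w)" using Re_herm_cline[OF assms w(1)] .
  then have "\<sigma> * Re (herm z z) = k * (\<sigma> * Re (herm w w))" by (simp add: mult.left_commute)
  also have "\<dots> > 0" using k(1) w(2) by (rule mult_pos_pos)
  finally show "\<sigma> * Re (herm z z) > 0" .
qed (use assms in \<open>unfold Dsign_def, blast\<close>)

lemma Dsign_subset_Zq: "Dsign \<sigma> \<subseteq> Zq"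
  by (auto simp: Dsign_def Zq_def)

lemma openZ_Dsign: "openZ (Dsign \<sigma>)"
proof -
  have "continuous_on isocone (\<lambda>z. \<sigma> * Re (herm z z))"
    unfolding herm_self onorm_eq_B B_inner by (intro continuous_intros)
  then have "openin (top_of_set isocone) (isocone \<inter> (\<lambda>z. \<sigma> * Re (herm z z)) -` {0<..})"
    by (rule continuous_openin_preimage_gen) simp
  moreover have "{z \<in> isocone. cline z \<in> Dsign \<sigma>} = isocone \<inter> (\<lambda>z. \<sigma> * Re (herm z z)) -` {0<..}"
    using cline_in_Dsign_iff by blast
  ultimately show ?thesis by (simp add: openZ_def Dsign_subset_Zq)
qed

section \<open>The action of the orthogonal group\<close>

lemma actL_cline: "linear g \<Longrightarrow> actL g (cline z) = cline (map_prod g g z)"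
  by (auto simp: actL_def cline_def cscale_def image_image linear_diff linear_add linear_scale)

lemma actL_id: "actL id L = L"
  by (simp add: actL_def)

lemma actL_comp: "actL (g \<circ> h) L = actL g (actL h L)"
  by (auto simp: actL_def image_image)

lemma Ogrp_linear: "g \<in> Ogrp \<Longrightarrow> linear g"
  and Ogrp_inj: "g \<in> Ogrp \<Longrightarrow> inj g"
  and Ogrp_one: "g \<in> Ogrp \<Longrightarrow> g one_o = one_o"
  and Ogrp_B: "g \<in> Ogrp \<Longrightarrow> B (g x) (g y) = B x y"
  unfolding Ogrp_def using bij_is_inj by blast+

lemma Ogrp_ImO: "g \<in> Ogrp \<Longrightarrow> x \<in> ImO \<Longrightarrow> g x \<in> ImO"
  using Ogrp_B[of g x one_o] by (simp add: ImO_def Ogrp_one)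

lemma Ogrp_isocone: assumes "g \<in> Ogrp" "z \<in> isocone" shows "map_prod g g z \<in> isocone"
proof -
  have "map_prod g g z \<noteq> 0"
  proof
    assume "map_prod g g z = 0"
    then have "g (fst z) = 0" "g (snd z) = 0"
      by (metis fst_map_prod fst_zero, metis snd_map_prod snd_zero)
    then have "g (fst z) = g 0" "g (snd z) = g 0"
      by (simp_all add: linear_0[OF Ogrp_linear[OF assms(1)]])
    then have "fst z = 0" "snd z = 0" using Ogrp_inj[OF assms(1)] by (simp_all add: inj_eq)
    then have "z = 0" by (simp add: prod_eqI)
    then show False using assms(2) by (simp add: isocone_def)
  qed
  then show ?thesis
    using assms Ogrp_ImO[OF assms(1)] by (simp add: isocone_iff onorm_eq_B Ogrp_B)
qed

lemma Ogrp_Re_herm: "g \<in> Ogrp \<Longrightarrow> Re (herm (map_prod g g z) (map_prod g g z)) = Re (herm z z)"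
  by (simp add: herm_self onorm_eq_B Ogrp_B)

lemma Ogrp_Dsign: assumes "g \<in> Ogrp" "L \<in> Dsign \<sigma>" shows "actL g L \<in> Dsign \<sigma>"
proof -
  obtain z where z: "L = cline z" "z \<in> isocone" "\<sigma> * Re (herm z z) > 0"
    using assms(2) by (auto simp: Dsign_def)
  have "actL g L = cline (map_prod g g z)" by (simp add: z(1) actL_cline Ogrp_linear[OF assms(1)])
  moreover have "map_prod g g z \<in> isocone" using Ogrp_isocone[OF assms(1) z(2)] .
  moreover have "\<sigma> * Re (herm (map_prod g g z) (map_prod g g z)) > 0"
    using z(3) by (simp only: Ogrp_Re_herm[OF assms(1)])
  ultimately show ?thesis unfolding Dsign_def by blast
qed

section \<open>The group \<open>G0 \<inter> SOe\<close>\<close>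

definition G0e :: "(soct \<Rightarrow> soct) set" where
  "G0e = G0 \<inter> SOe"

definition left_invertible_in :: "('a \<Rightarrow> 'a) set \<Rightarrow> ('a \<Rightarrow> 'a) \<Rightarrow> bool" where
  "left_invertible_in H h \<longleftrightarrow> h \<in> H \<and> (\<exists>h' \<in> H. h' \<circ> h = id)"

lemma SOe_subset_Ogrp: "SOe \<subseteq> Ogrp"
  unfolding SOe_def by (rule path_component_subset)

lemma id_in_Ogrp: "id \<in> Ogrp"
  by (simp add: Ogrp_def linear_id)

lemma id_in_SOe: "id \<in> SOe"
  unfolding SOe_def using id_in_Ogrp by (simp add: path_component_refl)

lemma cline_in_orbit: "cline z \<in> orbit SOe (cline z)"
  unfolding orbit_def using id_in_SOe actL_id[of "cline z"] by blast

lemma Ogrp_comp: "g \<in> Ogrp \<Longrightarrow> h \<in> Ogrp \<Longrightarrow> g \<circ> h \<in> Ogrp"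
  by (simp add: Ogrp_def linear_compose bij_comp del: split_paired_All)

lemma G0_comp: "g \<in> G0 \<Longrightarrow> h \<in> G0 \<Longrightarrow> g \<circ> h \<in> G0"
  by (simp add: G0_def linear_compose bij_comp del: omult.simps split_paired_All)

lemma G0I:
  assumes "linear f" "\<And>x. f' (f x) = x" "\<And>x. f (f' x) = x"
    and "\<And>x y. f (omult x y) = omult (f x) (f y)"
  shows "f \<in> G0"
  using assms bij_betw_byWitness[of UNIV f' f UNIV] unfolding G0_def by auto

lemma SOe_comp: assumes g: "g \<in> SOe" and h: "h \<in> SOe" shows "g \<circ> h \<in> SOe"
proof -
  obtain \<eta> where \<eta>: "path \<eta>" "path_image \<eta> \<subseteq> Ogrp" "pathstart \<eta> = id" "pathfinish \<eta> = h"
    using h unfolding SOe_def path_component_def by blast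
  have gO: "g \<in> Ogrp" using g SOe_subset_Ogrp by blast
  have "continuous_on UNIV g"
    using Ogrp_linear[OF gO] by (simp add: linear_continuous_on linear_conv_bounded_linear)
  then have "continuous_on {0..1} (\<lambda>t. g \<circ> \<eta> t)"
    using \<eta>(1) unfolding path_def
    by (intro continuous_on_coordinatewise_then_product)
      (simp add: continuous_on_compose2[OF _ continuous_on_product_then_coordinatewise])
  moreover have "path_image (\<lambda>t. g \<circ> \<eta> t) \<subseteq> Ogrp"
    using \<eta>(2) Ogrp_comp[OF gO] by (auto simp: path_image_def)
  ultimately have "path_component Ogrp g (g \<circ> h)"
    using \<eta>(3,4) unfolding path_component_def path_def pathstart_def pathfinish_def
    by (metis comp_id)
  moreover have "path_component Ogrp id g" using g by (simp add: SOe_def)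
  ultimately show ?thesis unfolding SOe_def using path_component_trans by blast
qed

lemma G0e_comp: "g \<in> G0e \<Longrightarrow> h \<in> G0e \<Longrightarrow> g \<circ> h \<in> G0e"
  by (simp add: G0e_def G0_comp SOe_comp)

lemma left_invertible_G0: "left_invertible_in G0e h \<Longrightarrow> h \<in> G0"
  by (simp add: left_invertible_in_def G0e_def)

lemma left_invertible_comp:
  assumes "left_invertible_in G0e g" "left_invertible_in G0e h"
  shows "left_invertible_in G0e (g \<circ> h)"
proof -
  obtain g' h' where "g' \<in> G0e" "g' \<circ> g = id" "h' \<in> G0e" "h' \<circ> h = id"
    using assms by (auto simp: left_invertible_in_def)
  then have "h' \<circ> g' \<in> G0e" "(h' \<circ> g') \<circ> (g \<circ> h) = id"
    by (simp_all add: G0e_comp comp_assoc) (metis comp_assoc comp_id)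
  then show ?thesis using assms by (auto simp: left_invertible_in_def G0e_comp)
qed

lemma connected_family_in_G0e:
  fixes F :: "'a::topological_space \<Rightarrow> soct \<Rightarrow> soct"
  assumes "path_connected T" "\<And>x. continuous_on T (\<lambda>t. F t x)" "F ` T \<subseteq> G0"
    and "a \<in> T" "F a = id" "b \<in> T"
  shows "F b \<in> G0e"
proof -
  have "continuous_on T F" using assms(2) by (rule continuous_on_coordinatewise_then_product)
  then have "path_connected (F ` T)" using assms(1) by (rule path_connected_continuous_image)
  then have "path_component (F ` T) id (F b)"
    using assms(4-6) by (metis image_eqI path_connected_component)
  then have "path_component Ogrp id (F b)"
    using path_component_of_subset assms(3) G0_subset_Ogrp by blast
  then show ?thesis using assms(3,6) by (auto simp: G0e_def SOe_def)
qed

lemma one_parameter_left_invertible: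
  fixes F :: "real \<Rightarrow> soct \<Rightarrow> soct"
  assumes "\<And>t. linear (F t)" "\<And>t x y. F t (omult x y) = omult (F t x) (F t y)"
    and "\<And>t x. F (- t) (F t x) = x" "\<And>x. continuous_on UNIV (\<lambda>t. F t x)" "F 0 = id"
  shows "left_invertible_in G0e (F t)"
proof -
  have "F s \<in> G0" for s
    using assms(3)[of "- s"] by (intro G0I[OF assms(1) assms(3)] assms(2)) simp
  then have "F s \<in> G0e" for s
    using connected_family_in_G0e[of UNIV F 0 s] assms(4,5) by auto
  moreover have "F (- t) \<circ> F t = id" using assms(3) by auto
  ultimately show ?thesis unfolding left_invertible_in_def by blast
qed

section \<open>Quaternions\<close>

lemma quat_cases: obtains a0 a1 a2 a3 where "x = (a0,a1,a2,a3)"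
  by (metis prod.exhaust)

definition qone :: quat where "qone = (1,0,0,0)"

lemma qmult_assoc: "qmult (qmult a b) c = qmult a (qmult b c)"
  by (cases a rule: quat_cases; cases b rule: quat_cases; cases c rule: quat_cases)
    (simp add: algebra_simps)

lemma qconj_qmult: "qconj (qmult a b) = qmult (qconj b) (qconj a)"
  by (cases a rule: quat_cases; cases b rule: quat_cases) (simp add: algebra_simps)

lemma qconj_qconj: "qconj (qconj a) = a"
  by (cases a rule: quat_cases) simp

lemma qmult_add_left: "qmult (a + b) c = qmult a c + qmult b c"
  and qmult_add_right: "qmult c (a + b) = qmult c a + qmult c b"
  and qmult_diff_left: "qmult (a - b) c = qmult a c - qmult b c"
  and qmult_diff_right: "qmult c (a - b) = qmult c a - qmult c b"
  and qmult_scaleR_left: "qmult (r *\<^sub>R a) c = r *\<^sub>R qmult a c"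
  and qmult_scaleR_right: "qmult c (r *\<^sub>R a) = r *\<^sub>R qmult c a"
  by (cases a rule: quat_cases; cases b rule: quat_cases; cases c rule: quat_cases;
      simp add: algebra_simps)+

lemma qmult_one_left: "qmult qone a = a"
  and qmult_one_right: "qmult a qone = a"
  by (cases a rule: quat_cases; simp add: qone_def)+

lemma qconj_one: "qconj qone = qone"
  by (simp add: qone_def)

lemma qmult_qconj_self: "qmult (qconj a) a = (a \<bullet> a) *\<^sub>R qone"
  and qmult_self_qconj: "qmult a (qconj a) = (a \<bullet> a) *\<^sub>R qone"
  by (cases a rule: quat_cases; simp add: qone_def power2_eq_square algebra_simps)+

lemma inner_qmult_self: "qmult a b \<bullet> qmult a b = (a \<bullet> a) * (b \<bullet> b)"
  by (cases a rule: quat_cases; cases b rule: quat_cases) (simp add: power2_eq_square algebra_simps)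

lemma inner_qconj_self: "qconj a \<bullet> qconj a = a \<bullet> a"
  by (cases a rule: quat_cases) simp

lemma qunit_cancel:
  assumes "p \<bullet> p = 1"
  shows "qmult p (qmult (qconj p) x) = x" "qmult (qconj p) (qmult p x) = x"
  using assms by (simp_all add: qmult_assoc[symmetric] qmult_qconj_self qmult_self_qconj
      qmult_scaleR_left qmult_one_left)

lemma bounded_bilinear_qmult: "bounded_bilinear qmult"
  unfolding bilinear_conv_bounded_bilinear[symmetric] bilinear_def
  by (simp add: linearI qmult_add_left qmult_add_right qmult_scaleR_left qmult_scaleR_right)

lemmas continuous_on_qmult [continuous_intros] = bounded_bilinear.continuous_on[OF bounded_bilinear_qmult]

lemma linear_qconj: "linear qconj"
proof (rule linearI)
  fix a b :: quat and r :: real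
  show "qconj (a + b) = qconj a + qconj b"
    by (cases a rule: quat_cases; cases b rule: quat_cases) simp
  show "qconj (r *\<^sub>R a) = r *\<^sub>R qconj a"
    by (cases a rule: quat_cases) simp
qed

lemmas continuous_on_qconj [continuous_intros] = linear_continuous_on_compose[OF _ linear_qconj]

lemma qconj_scaleR: "qconj (r *\<^sub>R a) = r *\<^sub>R qconj a"
  by (rule linear_scale[OF linear_qconj])

lemma norm_qmult: "norm (qmult a b) = norm a * norm b"
  by (simp add: norm_eq_sqrt_inner inner_qmult_self real_sqrt_mult)

lemma norm_qconj: "norm (qconj a) = norm a"
  by (simp add: norm_eq_sqrt_inner inner_qconj_self)

lemma qmult_zero_left: "qmult 0 a = 0"
  by (rule bounded_bilinear.zero_left[OF bounded_bilinear_qmult])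

lemma qmult_zero_middle: "qmult (qmult a (0, 0, 0, 0)) b = (0, 0, 0, 0)"
  by (cases a rule: quat_cases; cases b rule: quat_cases) simp

lemma fst_qconjugation: "fst (qmult (qmult p a) (qconj p)) = (p \<bullet> p) * fst a"
  by (cases a rule: quat_cases; cases p rule: quat_cases) (simp add: power2_eq_square algebra_simps)

lemma normalize_conjugator:
  assumes "w \<noteq> 0"
  obtains p where "p \<bullet> p = 1"
    "\<And>a. qmult (qmult p a) (qconj p) = (1 / (w \<bullet> w)) *\<^sub>R qmult (qmult w a) (qconj w)"
proof
  let ?p = "(1 / norm w) *\<^sub>R w"
  show "?p \<bullet> ?p = 1" using assms by (simp add: power2_norm_eq_inner[symmetric] power2_eq_square)
  show "qmult (qmult ?p a) (qconj ?p) = (1 / (w \<bullet> w)) *\<^sub>R qmult (qmult w a) (qconj w)" for a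
    by (simp add: qconj_scaleR qmult_scaleR_left qmult_scaleR_right power2_norm_eq_inner[symmetric]
        power2_eq_square)
qed

lemma rotate_to_i:
  assumes "fst a = 0"
  obtains p r where "p \<bullet> p = 1" "0 \<le> r" "qmult (qmult p a) (qconj p) = (0, r, 0, 0)"
proof -
  obtain a1 a2 a3 where a: "a = (0, a1, a2, a3)" using assms by (metis prod.collapse)
  define r where "r = sqrt (a1*a1 + a2*a2 + a3*a3)"
  have rr: "r * r = a1*a1 + a2*a2 + a3*a3" "0 \<le> r" by (simp_all add: r_def)
  have "\<bar>a1\<bar> \<le> r" unfolding r_def by (rule real_le_rsqrt) (simp add: power2_eq_square)
  then consider "r + a1 = 0" | "r + a1 > 0" by linarith
  then show thesis
  proof cases
    case 1
    then have "a2*a2 + a3*a3 = 0" using rr by algebra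
    then have "a = (0, -r, 0, 0)" using 1 by (simp add: a add_nonneg_eq_0_iff)
    then show thesis using that[of "(0,0,1,0)" r] rr(2) by simp
  next
    case 2
    \<comment> \<open>\<open>w = r - i a\<close>, the rotation by half the angle between \<open>a\<close> and \<open>i\<close>\<close>
    define w :: quat where "w = (r + a1, 0, a3, -a2)"
    have ww: "w \<bullet> w = 2 * r * (r + a1)" using rr(1) unfolding w_def by simp algebra
    then have "w \<noteq> 0" using 2 rr(2) \<open>\<bar>a1\<bar> \<le> r\<close> by auto
    have "qmult (qmult w a) (qconj w) = (w \<bullet> w) *\<^sub>R (0, r, 0, 0)"
      unfolding ww by (simp add: w_def a, intro conjI; (use rr(1) in algebra | simp add: algebra_simps)+)
    moreover obtain p where "p \<bullet> p = 1"
      "qmult (qmult p a) (qconj p) = (1 / (w \<bullet> w)) *\<^sub>R qmult (qmult w a) (qconj w)"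
      using normalize_conjugator[OF \<open>w \<noteq> 0\<close>] by metis
    ultimately show thesis using that[of p r] rr(2) \<open>w \<noteq> 0\<close> by simp
  qed
qed

lemma rotate_fixing_i:
  fixes b c :: real
  obtains p r where "p \<bullet> p = 1" "0 \<le> r" "qmult (qmult p (0, 1, 0, 0)) (qconj p) = (0, 1, 0, 0)"
    "\<And>x. qmult (qmult p (0, x, b, c)) (qconj p) = (0, x, r, 0)"
proof -
  define r where "r = sqrt (b*b + c*c)"
  have rr: "r * r = b*b + c*c" "0 \<le> r" by (simp_all add: r_def)
  have "\<bar>b\<bar> \<le> r" unfolding r_def by (rule real_le_rsqrt) (simp add: power2_eq_square)
  then consider "r + b = 0" | "r + b > 0" by linarith
  then show thesis
  proof cases
    case 1
    then have "c = 0" using rr by algebra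
    then show thesis using 1 rr(2) that[of "(0,1,0,0)" r] by (simp add: algebra_simps)
  next
    case 2
    \<comment> \<open>\<open>w = r - j (b j + c k)\<close>, commuting with \<open>i\<close>\<close>
    define w :: quat where "w = (r + b, -c, 0, 0)"
    have ww: "w \<bullet> w = 2 * r * (r + b)" using rr(1) unfolding w_def by simp algebra
    then have "w \<noteq> 0" using 2 rr(2) \<open>\<bar>b\<bar> \<le> r\<close> by auto
    have "qmult (qmult w (0, x, b, c)) (qconj w) = (w \<bullet> w) *\<^sub>R (0, x, r, 0)" for x
      unfolding ww by (simp add: w_def, intro conjI; (use rr(1) in algebra | simp add: algebra_simps)+)
    moreover have "qmult (qmult w (0, 1, 0, 0)) (qconj w) = (w \<bullet> w) *\<^sub>R (0, 1, 0, 0)"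
      by (simp add: w_def algebra_simps)
    moreover obtain p where "p \<bullet> p = 1"
      "\<And>a. qmult (qmult p a) (qconj p) = (1 / (w \<bullet> w)) *\<^sub>R qmult (qmult w a) (qconj w)"
      using normalize_conjugator[OF \<open>w \<noteq> 0\<close>] by metis
    ultimately show thesis using that[of p r] rr(2) \<open>w \<noteq> 0\<close> by simp
  qed
qed

lemma unit_factor_to_real:
  assumes "p \<bullet> p = 1"
  obtains q t where "q \<bullet> q = 1" "0 \<le> t" "qmult (qmult q b) (qconj p) = (t, 0, 0, 0)"
proof (cases "b = 0")
  case True
  have "qmult (qmult qone b) (qconj p) = (0, 0, 0, 0)"
    using True by (simp add: qmult_one_left qmult_zero_left, simp add: zero_prod_def)
  then show thesis using that[of qone 0] by (simp add: qone_def)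
next
  case False
  let ?q = "(1 / norm b) *\<^sub>R qmult p (qconj b)"
  have "norm p = 1" using assms by (simp add: norm_eq_1)
  then have "norm ?q = 1" using False by (simp add: norm_qmult norm_qconj)
  then have "?q \<bullet> ?q = 1" by (simp only: norm_eq_1)
  have "qmult (qmult ?q b) (qconj p) = (1 / norm b) *\<^sub>R qmult p (qmult (qmult (qconj b) b) (qconj p))"
    by (simp add: qmult_scaleR_left qmult_assoc)
  also have "\<dots> = (b \<bullet> b / norm b) *\<^sub>R qone"
    using assms by (simp add: qmult_qconj_self qmult_scaleR_left qmult_scaleR_right qmult_one_left qmult_self_qconj)
  also have "\<dots> = (norm b, 0, 0, 0)"
    using False by (simp add: qone_def dot_square_norm power2_eq_square)
  finally show thesis using that \<open>?q \<bullet> ?q = 1\<close> norm_ge_zero by blast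
qed

section \<open>Generators of \<open>G0 \<inter> SOe\<close>\<close>

definition unit_quat_map :: "quat \<Rightarrow> quat \<Rightarrow> soct \<Rightarrow> soct" where
  "unit_quat_map p q x = (qmult (qmult p (fst x)) (qconj p), qmult (qmult q (snd x)) (qconj p))"

lemma unit_quat_map_Pair:
  "unit_quat_map p q (a, b) = (qmult p (qmult a (qconj p)), qmult q (qmult b (qconj p)))"
  by (simp add: unit_quat_map_def qmult_assoc)

lemma unit_quat_map_qone: "unit_quat_map qone qone = id"
  by (rule ext) (simp add: unit_quat_map_def qconj_one qmult_one_left qmult_one_right)

lemma unit_quat_map_inverse:
  assumes "p \<bullet> p = 1" "q \<bullet> q = 1"
  shows "unit_quat_map (qconj p) (qconj q) (unit_quat_map p q x) = x"
  using assms by (cases x) (simp add: unit_quat_map_Pair qconj_qconj qmult_assoc qunit_cancel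
      qmult_qconj_self qmult_one_right del: qmult.simps)

lemma unit_quat_map_omult:
  assumes "p \<bullet> p = 1" "q \<bullet> q = 1"
  shows "unit_quat_map p q (omult x y) = omult (unit_quat_map p q x) (unit_quat_map p q y)"
  using assms by (cases x; cases y) (simp add: unit_quat_map_Pair qmult_assoc qconj_qmult qconj_qconj
      qunit_cancel qmult_add_left qmult_add_right del: qmult.simps)

lemma unit_quat_map_in_G0:
  assumes "p \<bullet> p = 1" "q \<bullet> q = 1"
  shows "unit_quat_map p q \<in> G0"
proof (rule G0I)
  show "linear (unit_quat_map p q)"
    by (rule linearI)
      (simp_all add: unit_quat_map_def qmult_add_left qmult_add_right qmult_scaleR_left qmult_scaleR_right)
  show "unit_quat_map (qconj p) (qconj q) (unit_quat_map p q x) = x" for x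
    using assms by (rule unit_quat_map_inverse)
  show "unit_quat_map p q (unit_quat_map (qconj p) (qconj q) x) = x" for x
    using unit_quat_map_inverse[of "qconj p" "qconj q"] assms by (simp add: inner_qconj_self qconj_qconj)
qed (use assms in \<open>rule unit_quat_map_omult\<close>)

lemma left_invertible_unit_quat_map:
  assumes "p \<bullet> p = 1" "q \<bullet> q = 1"
  shows "left_invertible_in G0e (unit_quat_map p q)"
proof -
  let ?S = "sphere (0::quat) 1 \<times> sphere (0::quat) 1"
  let ?F = "\<lambda>w. unit_quat_map (fst w) (snd w)"
  have units: "w \<in> ?S \<longleftrightarrow> fst w \<bullet> fst w = 1 \<and> snd w \<bullet> snd w = 1" for w
    by (simp add: mem_Times_iff norm_eq_1)
  have "path_connected ?S" by (intro path_connected_Times path_connected_sphere) simp_all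
  moreover have "continuous_on ?S (\<lambda>w. ?F w x)" for x
    unfolding unit_quat_map_def by (intro continuous_intros)
  moreover have "?F ` ?S \<subseteq> G0" using units unit_quat_map_in_G0 by blast
  moreover have "?F (qone, qone) = id" by (simp add: unit_quat_map_qone)
  moreover have "(qone, qone) \<in> ?S" "(p, q) \<in> ?S" "(qconj p, qconj q) \<in> ?S"
    unfolding units using assms by (simp_all add: qone_def inner_qconj_self)
  ultimately have "?F (p, q) \<in> G0e" "?F (qconj p, qconj q) \<in> G0e"
    using connected_family_in_G0e[of ?S ?F] by blast+
  moreover have "unit_quat_map (qconj p) (qconj q) \<circ> unit_quat_map p q = id"
    using unit_quat_map_inverse[OF assms] by auto
  ultimately show ?thesis unfolding left_invertible_in_def by auto
qed

text \<open>Coordinates of a split octonion \<open>((x0,x1,x2,x3),(x4,x5,x6,x7))\<close> are numbered 0 to 7.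
  The boost \<open>boost_ij\<close> is a hyperbolic rotation of the \<open>(i,j)\<close>-plane, coupled with a second one
  as an automorphism requires.\<close>

definition boost14 :: "real \<Rightarrow> soct \<Rightarrow> soct" where
  "boost14 t x = (case x of ((a0,a1,a2,a3),(b0,b1,b2,b3)) \<Rightarrow>
     ((a0, cosh t * a1 + sinh t * b0, a2, cosh t * a3 - sinh t * b2),
      (sinh t * a1 + cosh t * b0, b1, cosh t * b2 - sinh t * a3, b3)))"

definition boost24 :: "real \<Rightarrow> soct \<Rightarrow> soct" where
  "boost24 t x = (case x of ((a0,a1,a2,a3),(b0,b1,b2,b3)) \<Rightarrow>
     ((a0, a1, cosh t * a2 + sinh t * b0, cosh t * a3 + sinh t * b1),
      (sinh t * a2 + cosh t * b0, sinh t * a3 + cosh t * b1, b2, b3)))"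

definition boost15 :: "real \<Rightarrow> soct \<Rightarrow> soct" where
  "boost15 t x = (case x of ((a0,a1,a2,a3),(b0,b1,b2,b3)) \<Rightarrow>
     ((a0, cosh t * a1 - sinh t * b1, cosh t * a2 + sinh t * b2, a3),
      (b0, cosh t * b1 - sinh t * a1, sinh t * a2 + cosh t * b2, b3)))"

definition shear :: "real \<Rightarrow> soct \<Rightarrow> soct" where
  "shear t x = (case x of ((a0,a1,a2,a3),(b0,b1,b2,b3)) \<Rightarrow>
     ((a0, a1 + t * (b2 - a2), a2 + t * (a1 + b1), a3),
      (b0, b1 + t * (a2 - b2), b2 + t * (a1 + b1), b3)))"

lemma cosh_sinh_real: "cosh t * cosh t - sinh t * sinh t = (1::real)"
  using cosh_square_eq[of t] by (simp add: power2_eq_square)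

lemma hyperbolic_angle:
  fixes c s :: real
  assumes "c * c - s * s = 1" "0 < c"
  obtains t where "cosh t = c" "sinh t = s"
proof
  show "sinh (arsinh s) = s" by simp
  have "c = sqrt (s\<^sup>2 + 1)"
    using assms by (intro real_sqrt_unique[symmetric]) (simp_all add: power2_eq_square)
  then show "cosh (arsinh s) = c" by (simp add: cosh_arsinh_real)
qed

lemma left_invertible_boost14: "left_invertible_in G0e (boost14 t)"
proof (rule one_parameter_left_invertible)
  fix s x y
  show "linear (boost14 s)"
    by (intro linearI) (simp_all add: boost14_def case_prod_beta algebra_simps)
  show "boost14 s (omult x y) = omult (boost14 s x) (boost14 s y)"
    by (induct x rule: soct_induct; induct y rule: soct_induct) (simp add: boost14_def, intro conjI,
        (use cosh_sinh_real[of s] in algebra | simp add: algebra_simps)+)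
  show "boost14 (- s) (boost14 s x) = x"
    by (induct x rule: soct_induct) (simp add: boost14_def, intro conjI,
        (use cosh_sinh_real[of s] in algebra | simp add: algebra_simps)+)
  show "continuous_on UNIV (\<lambda>s. boost14 s x)"
    by (induct x rule: soct_induct) (simp add: boost14_def, intro continuous_intros)
qed (simp add: boost14_def fun_eq_iff split: prod.splits)

lemma left_invertible_boost24: "left_invertible_in G0e (boost24 t)"
proof (rule one_parameter_left_invertible)
  fix s x y
  show "linear (boost24 s)"
    by (intro linearI) (simp_all add: boost24_def case_prod_beta algebra_simps)
  show "boost24 s (omult x y) = omult (boost24 s x) (boost24 s y)"
    by (induct x rule: soct_induct; induct y rule: soct_induct) (simp add: boost24_def, intro conjI,
        (use cosh_sinh_real[of s] in algebra | simp add: algebra_simps)+)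
  show "boost24 (- s) (boost24 s x) = x"
    by (induct x rule: soct_induct) (simp add: boost24_def, intro conjI,
        (use cosh_sinh_real[of s] in algebra | simp add: algebra_simps)+)
  show "continuous_on UNIV (\<lambda>s. boost24 s x)"
    by (induct x rule: soct_induct) (simp add: boost24_def, intro continuous_intros)
qed (simp add: boost24_def fun_eq_iff split: prod.splits)

lemma left_invertible_boost15: "left_invertible_in G0e (boost15 t)"
proof (rule one_parameter_left_invertible)
  fix s x y
  show "linear (boost15 s)"
    by (intro linearI) (simp_all add: boost15_def case_prod_beta algebra_simps)
  show "boost15 s (omult x y) = omult (boost15 s x) (boost15 s y)"
    by (induct x rule: soct_induct; induct y rule: soct_induct) (simp add: boost15_def, intro conjI,
        (use cosh_sinh_real[of s] in algebra | simp add: algebra_simps)+)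
  show "boost15 (- s) (boost15 s x) = x"
    by (induct x rule: soct_induct) (simp add: boost15_def, intro conjI,
        (use cosh_sinh_real[of s] in algebra | simp add: algebra_simps)+)
  show "continuous_on UNIV (\<lambda>s. boost15 s x)"
    by (induct x rule: soct_induct) (simp add: boost15_def, intro continuous_intros)
qed (simp add: boost15_def fun_eq_iff split: prod.splits)

lemma left_invertible_shear: "left_invertible_in G0e (shear t)"
proof (rule one_parameter_left_invertible)
  fix s x y
  show "linear (shear s)"
    by (intro linearI) (simp_all add: shear_def case_prod_beta algebra_simps)
  show "shear s (omult x y) = omult (shear s x) (shear s y)"
    by (induct x rule: soct_induct; induct y rule: soct_induct) (simp add: shear_def algebra_simps)
  show "shear (- s) (shear s x) = x"
    by (induct x rule: soct_induct) (simp add: shear_def algebra_simps)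
  show "continuous_on UNIV (\<lambda>s. shear s x)"
    by (induct x rule: soct_induct) (simp add: shear_def, intro continuous_intros)
qed (simp add: shear_def fun_eq_iff split: prod.splits)

section \<open>Reduction to standard frames\<close>

definition e1 :: soct where "e1 = ((0,1,0,0),(0,0,0,0))"
definition e2 :: soct where "e2 = ((0,0,1,0),(0,0,0,0))"
definition e4 :: soct where "e4 = ((0,0,0,0),(1,0,0,0))"
definition e5 :: soct where "e5 = ((0,0,0,0),(0,1,0,0))"

lemma unit_quat_map_normal_form:
  assumes "u \<in> ImO"
  obtains p q r t where "p \<bullet> p = 1" "q \<bullet> q = 1" "0 \<le> r" "0 \<le> t"
    "unit_quat_map p q u = ((0, r, 0, 0), (t, 0, 0, 0))"
proof -
  obtain p r where p: "p \<bullet> p = 1" "0 \<le> r" "qmult (qmult p (fst u)) (qconj p) = (0, r, 0, 0)"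
    using rotate_to_i assms by (metis ImO_iff)
  obtain q t where "q \<bullet> q = 1" "0 \<le> t" "qmult (qmult q (snd u)) (qconj p) = (t, 0, 0, 0)"
    using unit_factor_to_real[OF p(1)] .
  then show thesis using that p by (simp add: unit_quat_map_def)
qed

lemma reduce_positive_vector:
  assumes "u \<in> ImO" "onorm u = 1"
  obtains h where "left_invertible_in G0e h" "h u = e1"
proof -
  obtain p q r t where pq: "p \<bullet> p = 1" "q \<bullet> q = 1" "0 \<le> r" "0 \<le> t"
    and k: "unit_quat_map p q u = ((0, r, 0, 0), (t, 0, 0, 0))"
    using unit_quat_map_normal_form[OF assms(1)] .
  have "onorm (unit_quat_map p q u) = 1"
    using G0_onorm[OF unit_quat_map_in_G0[OF pq(1,2)]] assms(2) by simp
  then have rt: "r * r - t * t = 1" by (simp add: k onorm_coords)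
  then have "0 < r" using pq(3) mult_nonneg_nonneg[OF pq(4) pq(4)] by (cases "r = 0") auto
  then obtain \<theta> where \<theta>: "cosh \<theta> = r" "sinh \<theta> = t" using hyperbolic_angle rt by blast
  show thesis
  proof (rule that[of "boost14 (- \<theta>) \<circ> unit_quat_map p q"])
    show "left_invertible_in G0e (boost14 (- \<theta>) \<circ> unit_quat_map p q)"
      by (intro left_invertible_comp left_invertible_boost14 left_invertible_unit_quat_map pq(1,2))
    show "(boost14 (- \<theta>) \<circ> unit_quat_map p q) u = e1"
      using rt by (simp add: k boost14_def \<theta> e1_def)
  qed
qed

lemma reduce_negative_vector:
  assumes "u \<in> ImO" "onorm u = -1"
  obtains h where "left_invertible_in G0e h" "h u = e4"
proof -
  obtain p q r t where pq: "p \<bullet> p = 1" "q \<bullet> q = 1" "0 \<le> r" "0 \<le> t"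
    and k: "unit_quat_map p q u = ((0, r, 0, 0), (t, 0, 0, 0))"
    using unit_quat_map_normal_form[OF assms(1)] .
  have "onorm (unit_quat_map p q u) = -1"
    using G0_onorm[OF unit_quat_map_in_G0[OF pq(1,2)]] assms(2) by simp
  then have tr: "t * t - r * r = 1" by (simp add: k onorm_coords)
  then have "0 < t" using pq(4) mult_nonneg_nonneg[OF pq(3) pq(3)] by (cases "t = 0") auto
  then obtain \<theta> where \<theta>: "cosh \<theta> = t" "sinh \<theta> = r" using hyperbolic_angle tr by blast
  show thesis
  proof (rule that[of "boost14 (- \<theta>) \<circ> unit_quat_map p q"])
    show "left_invertible_in G0e (boost14 (- \<theta>) \<circ> unit_quat_map p q)"
      by (intro left_invertible_comp left_invertible_boost14 left_invertible_unit_quat_map pq(1,2))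
    show "(boost14 (- \<theta>) \<circ> unit_quat_map p q) u = e4"
      using tr by (simp add: k boost14_def \<theta> e4_def algebra_simps)
  qed
qed

lemma unit_quat_map_fixes_e4:
  assumes "p \<bullet> p = 1" shows "unit_quat_map p p e4 = e4"
proof -
  have "qmult (qmult p qone) (qconj p) = qone" using assms by (simp add: qmult_one_right qmult_self_qconj)
  then show ?thesis by (simp add: unit_quat_map_def e4_def qmult_zero_middle qone_def)
qed

lemma reduce_positive_frame_at_e1:
  assumes "v \<in> ImO" "onorm v = 1" "B v e1 = 0"
  obtains h where "left_invertible_in G0e h" "h e1 = e1" "h v = e2"
proof -
  obtain g2 g3 d where v: "v = ((0, 0, g2, g3), d)"
    using assms(1,3) by (induct v rule: soct_induct) (simp add: ImO_iff B_coords e1_def)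
  obtain p r where p: "p \<bullet> p = 1" "0 \<le> r" "qmult (qmult p (0, 1, 0, 0)) (qconj p) = (0, 1, 0, 0)"
    "\<And>x. qmult (qmult p (0, x, g2, g3)) (qconj p) = (0, x, r, 0)"
    using rotate_fixing_i[where b = g2 and c = g3] by blast
  obtain q t where q: "q \<bullet> q = 1" "0 \<le> t" "qmult (qmult q d) (qconj p) = (t, 0, 0, 0)"
    using unit_factor_to_real[OF p(1)] .
  have kv: "unit_quat_map p q v = ((0, 0, r, 0), (t, 0, 0, 0))"
    using p(4)[of 0] q(3) by (simp add: unit_quat_map_def v)
  have ke: "unit_quat_map p q e1 = e1"
    using p(3) by (simp add: unit_quat_map_def e1_def qmult_zero_middle)
  have "onorm (unit_quat_map p q v) = 1"
    using G0_onorm[OF unit_quat_map_in_G0[OF p(1) q(1)]] assms(2) by simp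
  then have rt: "r * r - t * t = 1" by (simp add: kv onorm_coords)
  then have "0 < r" using p(2) mult_nonneg_nonneg[OF q(2) q(2)] by (cases "r = 0") auto
  then obtain \<theta> where \<theta>: "cosh \<theta> = r" "sinh \<theta> = t" using hyperbolic_angle rt by blast
  show thesis
  proof (rule that[of "boost24 (- \<theta>) \<circ> unit_quat_map p q"])
    show "left_invertible_in G0e (boost24 (- \<theta>) \<circ> unit_quat_map p q)"
      by (intro left_invertible_comp left_invertible_boost24 left_invertible_unit_quat_map p(1) q(1))
    show "(boost24 (- \<theta>) \<circ> unit_quat_map p q) e1 = e1"
      by (simp add: ke) (simp add: boost24_def e1_def)
    show "(boost24 (- \<theta>) \<circ> unit_quat_map p q) v = e2"
      using rt by (simp add: kv boost24_def \<theta> e2_def)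
  qed
qed

lemma reduce_negative_frame_at_e4_rotate:
  assumes "v \<in> ImO" "B v e4 = 0"
  obtains h x1 y1 r where "left_invertible_in G0e h" "h e4 = e4" "x1 \<le> y1"
    "h v = ((0, x1, r, 0), (0, y1, r, 0))"
proof -
  obtain ga de where v: "v = (ga, de)" "fst ga = 0" "fst de = 0"
    using assms by (induct v rule: soct_induct) (simp add: ImO_iff B_coords e4_def)
  have "fst (de - ga) = 0" using v(2,3) by simp
  then obtain p m where p: "p \<bullet> p = 1" "0 \<le> m" "qmult (qmult p (de - ga)) (qconj p) = (0, m, 0, 0)"
    by (rule rotate_to_i)
  define ga' where "ga' = qmult (qmult p ga) (qconj p)"
  define de' where "de' = qmult (qmult p de) (qconj p)"
  have "de' - ga' = (0, m, 0, 0)"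
    using p(3) by (simp add: ga'_def de'_def qmult_diff_left qmult_diff_right)
  moreover have "fst ga' = 0" "fst de' = 0" by (simp_all add: ga'_def de'_def fst_qconjugation v)
  ultimately obtain x1 x2 x3 where ga': "ga' = (0, x1, x2, x3)" and de': "de' = (0, x1 + m, x2, x3)"
    by (cases ga' rule: quat_cases; cases de' rule: quat_cases) auto
  obtain p' r where p': "p' \<bullet> p' = 1" "0 \<le> r" "qmult (qmult p' (0, 1, 0, 0)) (qconj p') = (0, 1, 0, 0)"
    "\<And>x. qmult (qmult p' (0, x, x2, x3)) (qconj p') = (0, x, r, 0)"
    using rotate_fixing_i[where b = x2 and c = x3] by blast
  show thesis
  proof (rule that[of "unit_quat_map p' p' \<circ> unit_quat_map p p"])
    show "left_invertible_in G0e (unit_quat_map p' p' \<circ> unit_quat_map p p)"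
      by (intro left_invertible_comp left_invertible_unit_quat_map p(1) p'(1))
    show "(unit_quat_map p' p' \<circ> unit_quat_map p p) e4 = e4"
      by (simp add: unit_quat_map_fixes_e4 p(1) p'(1))
    show "(unit_quat_map p' p' \<circ> unit_quat_map p p) v = ((0, x1, r, 0), (0, x1 + m, r, 0))"
      using ga' de' p'(4) by (simp add: unit_quat_map_def v(1) ga'_def[symmetric] de'_def[symmetric])
  qed (use p(2) in simp)
qed

lemma reduce_negative_frame_at_e4_shear:
  assumes "x1 \<le> y1" "onorm ((0, x1, r, 0), (0, y1, r, 0)) = -1"
  obtains h where "left_invertible_in G0e h" "h e4 = e4" "h ((0, x1, r, 0), (0, y1, r, 0)) = e5"
proof -
  have yx: "y1 * y1 - x1 * x1 = 1" using assms(2) by (simp add: onorm_coords)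
  then have "(y1 - x1) * (y1 + x1) = 1" by (simp add: algebra_simps)
  moreover have "(y1 - x1) * (y1 + x1) \<le> 0" if "y1 + x1 \<le> 0"
    using assms(1) that by (intro mult_nonneg_nonpos) simp_all
  ultimately have "0 < y1 + x1" by fastforce
  then have "0 < y1" using assms(1) by linarith
  then obtain \<theta> where \<theta>: "cosh \<theta> = y1" "sinh \<theta> = x1" using hyperbolic_angle yx by blast
  define \<sigma> where "\<sigma> = - r / (x1 + y1)"
  have sh: "shear \<sigma> ((0, x1, r, 0), (0, y1, r, 0)) = ((0, x1, 0, 0), (0, y1, 0, 0))"
    using \<open>0 < y1 + x1\<close> by (simp add: shear_def \<sigma>_def field_simps)
  show thesis
  proof (rule that[of "boost15 \<theta> \<circ> shear \<sigma>"])
    show "left_invertible_in G0e (boost15 \<theta> \<circ> shear \<sigma>)"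
      by (intro left_invertible_comp left_invertible_boost15 left_invertible_shear)
    show "(boost15 \<theta> \<circ> shear \<sigma>) e4 = e4"
      by (simp add: shear_def boost15_def e4_def)
    show "(boost15 \<theta> \<circ> shear \<sigma>) ((0, x1, r, 0), (0, y1, r, 0)) = e5"
      using yx by (simp add: sh boost15_def \<theta> e5_def algebra_simps)
  qed
qed

lemma reduce_positive_frame:
  assumes "u \<in> ImO" "v \<in> ImO" "onorm u = 1" "onorm v = 1" "B u v = 0"
  obtains h where "left_invertible_in G0e h" "h u = e1" "h v = e2"
proof -
  obtain h1 where h1: "left_invertible_in G0e h1" "h1 u = e1"
    using reduce_positive_vector[OF assms(1,3)] .
  have g: "h1 \<in> G0" using h1(1) by (rule left_invertible_G0)
  have "h1 v \<in> ImO" "onorm (h1 v) = 1" "B (h1 v) e1 = 0"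
    using G0_ImO[OF g assms(2)] assms(4,5) G0_B[OF g, of v u] h1(2) B_commute[of v u] by simp_all
  then obtain h2 where "left_invertible_in G0e h2" "h2 e1 = e1" "h2 (h1 v) = e2"
    using reduce_positive_frame_at_e1 by blast
  then show thesis using that[of "h2 \<circ> h1"] h1 left_invertible_comp by simp
qed

lemma reduce_negative_frame:
  assumes "u \<in> ImO" "v \<in> ImO" "onorm u = -1" "onorm v = -1" "B u v = 0"
  obtains h where "left_invertible_in G0e h" "h u = e4" "h v = e5"
proof -
  obtain h1 where h1: "left_invertible_in G0e h1" "h1 u = e4"
    using reduce_negative_vector[OF assms(1,3)] .
  have g1: "h1 \<in> G0" using h1(1) by (rule left_invertible_G0)
  have "h1 v \<in> ImO" "B (h1 v) e4 = 0"
    using G0_ImO[OF g1 assms(2)] assms(5) G0_B[OF g1, of v u] h1(2) B_commute[of v u] by simp_all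
  then obtain h2 x1 y1 r where h2: "left_invertible_in G0e h2" "h2 e4 = e4" "x1 \<le> y1"
    "h2 (h1 v) = ((0, x1, r, 0), (0, y1, r, 0))"
    using reduce_negative_frame_at_e4_rotate by blast
  have "onorm (h2 (h1 v)) = -1"
    using G0_onorm[OF left_invertible_G0[OF h2(1)]] G0_onorm[OF g1] assms(4) by simp
  then obtain h3 where "left_invertible_in G0e h3" "h3 e4 = e4" "h3 (h2 (h1 v)) = e5"
    using reduce_negative_frame_at_e4_shear[OF h2(3)] unfolding h2(4) by blast
  then show thesis using that[of "h3 \<circ> h2 \<circ> h1"] h1 h2 left_invertible_comp by simp
qed

section \<open>Transitivity on \<open>D\<^sub>+\<close> and \<open>D\<^sub>-\<close>\<close>

lemma isocone_normal_form:
  assumes "z \<in> isocone" "Re (herm z z) \<noteq> 0"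
  obtains u v where "cline z = cline (u, v)" "u \<in> ImO" "v \<in> ImO" "B u v = 0"
    "onorm u = sgn (Re (herm z z))" "onorm v = onorm u"
proof -
  obtain a b where z: "z = (a, b)" by (rule prod.exhaust)
  have ab: "a \<in> ImO" "b \<in> ImO" "onorm a = onorm b" "B a b = 0"
    using assms(1) by (simp_all add: isocone_iff z)
  have h: "Re (herm z z) = 2 * onorm a" using ab(3) by (simp add: herm_self z)
  define l where "l = 1 / sqrt \<bar>onorm a\<bar>"
  have "l \<noteq> 0" "l * l * onorm a = sgn (onorm a)"
    using assms(2) by (simp_all add: l_def h sgn_if)
  moreover have "cline z = cline (l *\<^sub>R a, l *\<^sub>R b)"
    using cline_cscale[of "complex_of_real l" z] \<open>l \<noteq> 0\<close> by (simp add: z cscale_of_real)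
  ultimately show thesis
    using that[of "l *\<^sub>R a" "l *\<^sub>R b"] ab by (simp add: ImO_scaleR onorm_eq_B B_simps h sgn_mult)
qed

lemma transitive_via_base_point:
  assumes "\<And>L. L \<in> D \<Longrightarrow> \<exists>h. left_invertible_in G0e h \<and> actL h L = L0" "L \<in> D" "L' \<in> D"
  shows "\<exists>g \<in> G0e. actL g L = L'"
proof -
  obtain h where h: "h \<in> G0e" "actL h L = L0"
    using assms(1)[OF assms(2)] by (auto simp: left_invertible_in_def)
  obtain h' h'' where h': "h'' \<in> G0e" "h'' \<circ> h' = id" "actL h' L' = L0"
    using assms(1)[OF assms(3)] by (auto simp: left_invertible_in_def)
  have "actL (h'' \<circ> h) L = actL h'' (actL h' L')" by (simp add: actL_comp h(2) h'(3))
  also have "\<dots> = actL (h'' \<circ> h') L'" by (simp only: actL_comp)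
  also have "\<dots> = L'" by (simp add: h'(2) actL_def)
  finally show ?thesis using G0e_comp[OF h'(1) h(1)] by blast
qed

lemma Dplus_to_base_point:
  assumes "L \<in> Dplus"
  shows "\<exists>h. left_invertible_in G0e h \<and> actL h L = cline (e1, e2)"
proof -
  obtain z where z: "L = cline z" "z \<in> isocone" "Re (herm z z) > 0"
    using assms by (auto simp: Dplus_def)
  have "Re (herm z z) \<noteq> 0" using z(3) by simp
  then obtain u v where uv: "L = cline (u, v)" "u \<in> ImO" "v \<in> ImO" "B u v = 0"
    "onorm u = sgn (Re (herm z z))" "onorm v = onorm u"
    using isocone_normal_form[OF z(2)] unfolding z(1) by blast
  then have "onorm u = 1" "onorm v = 1" using z(3) by simp_all
  then obtain h where "left_invertible_in G0e h" "h u = e1" "h v = e2"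
    using reduce_positive_frame uv(2-4) by blast
  then show ?thesis using uv(1) by (auto simp: actL_cline left_invertible_in_def G0e_def G0_linear)
qed

lemma Dplus_transitive: "L \<in> Dplus \<Longrightarrow> L' \<in> Dplus \<Longrightarrow> \<exists>g \<in> G0e. actL g L = L'"
  by (rule transitive_via_base_point[OF Dplus_to_base_point])

lemma Dminus_to_base_point:
  assumes "L \<in> Dminus"
  shows "\<exists>h. left_invertible_in G0e h \<and> actL h L = cline (e4, e5)"
proof -
  obtain z where z: "L = cline z" "z \<in> isocone" "Re (herm z z) < 0"
    using assms by (auto simp: Dminus_def)
  have "Re (herm z z) \<noteq> 0" using z(3) by simp
  then obtain u v where uv: "L = cline (u, v)" "u \<in> ImO" "v \<in> ImO" "B u v = 0"
    "onorm u = sgn (Re (herm z z))" "onorm v = onorm u"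
    using isocone_normal_form[OF z(2)] unfolding z(1) by blast
  then have "onorm u = -1" "onorm v = -1" using z(3) by simp_all
  then obtain h where "left_invertible_in G0e h" "h u = e4" "h v = e5"
    using reduce_negative_frame uv(2-4) by blast
  then show ?thesis using uv(1) by (auto simp: actL_cline left_invertible_in_def G0e_def G0_linear)
qed

lemma Dminus_transitive: "L \<in> Dminus \<Longrightarrow> L' \<in> Dminus \<Longrightarrow> \<exists>g \<in> G0e. actL g L = L'"
  by (rule transitive_via_base_point[OF Dminus_to_base_point])

lemma orbit_SOe_eq:
  assumes "L \<in> Dsign \<sigma>" "\<And>L'. L' \<in> Dsign \<sigma> \<Longrightarrow> \<exists>g \<in> G0e. actL g L = L'"
  shows "orbit SOe L = Dsign \<sigma>"
proof
  show "orbit SOe L \<subseteq> Dsign \<sigma>"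
    using Ogrp_Dsign[OF _ assms(1)] SOe_subset_Ogrp by (auto simp: orbit_def)
  show "Dsign \<sigma> \<subseteq> orbit SOe L"
    using assms(2) by (auto simp: orbit_def G0e_def)
qed

lemma base_point_Dplus: "cline (e1, e2) \<in> Dplus"
proof -
  have "(e1, e2) \<in> isocone" "Re (herm (e1, e2) (e1, e2)) > 0"
    by (simp_all add: isocone_iff e1_def e2_def ImO_iff onorm_coords B_coords herm_self zero_prod_def)
  then show ?thesis unfolding Dplus_def by blast
qed

lemma base_point_Dminus: "cline (e4, e5) \<in> Dminus"
proof -
  have "(e4, e5) \<in> isocone" "Re (herm (e4, e5) (e4, e5)) < 0"
    by (simp_all add: isocone_iff e4_def e5_def ImO_iff onorm_coords B_coords herm_self zero_prod_def)
  then show ?thesis unfolding Dminus_def by blast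
qed

lemma orbit_SOe_Dplus: "L \<in> Dplus \<Longrightarrow> orbit SOe L = Dplus"
  using orbit_SOe_eq[of L 1] Dplus_transitive[of L] by (simp add: Dplus_eq_Dsign)

lemma orbit_SOe_Dminus: "L \<in> Dminus \<Longrightarrow> orbit SOe L = Dminus"
  using orbit_SOe_eq[of L "-1"] Dminus_transitive[of L] by (simp add: Dminus_eq_Dsign)

lemma Dplus_Int_Dminus: "Dplus \<inter> Dminus = {}"
proof -
  have "cline z \<notin> Dminus" if "z \<in> isocone" "Re (herm z z) > 0" for z
    using that cline_in_Dsign_iff[of z "-1"] by (simp add: Dminus_eq_Dsign)
  then show ?thesis unfolding Dplus_def by blast
qed

section \<open>The orbits of isotropic lines with \<open>\<langle>z,z\<rangle> = 0\<close> are not open\<close>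

lemma exists_unit_orthogonal:
  obtains p where "p \<in> ImO" "onorm p = 1" "B p u = 0" "B p v = 0"
proof -
  define im :: "soct \<Rightarrow> real \<times> real \<times> real" where
    "im x = (fst (snd (fst x)), fst (snd (snd (fst x))), snd (snd (snd (fst x))))" for x
  have "dim {im u, im v} \<le> card {im u, im v}" by (rule dim_le_card') simp
  also have "\<dots> < DIM(real \<times> real \<times> real)" by (cases "im u = im v") simp_all
  finally obtain y where "y \<noteq> 0" "\<And>w. w \<in> span {im u, im v} \<Longrightarrow> orthogonal y w"
    using orthogonal_to_subspace_exists by blast
  then have y: "y \<bullet> im u = 0" "y \<bullet> im v = 0" "y \<bullet> y > 0" by (simp_all add: span_base orthogonal_def)
  obtain y1 y2 y3 where y123: "y = (y1, y2, y3)" by (metis prod.exhaust)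
  define p :: soct where "p = (1 / norm y) *\<^sub>R ((0, y1, y2, y3), (0, 0, 0, 0))"
  have Bp: "B p x = (1 / norm y) * (y \<bullet> im x)" for x
    by (induct x rule: soct_induct) (simp add: p_def B_coords y123 im_def add_divide_distrib)
  show thesis
  proof (rule that)
    show "p \<in> ImO" by (simp add: p_def ImO_iff)
    have "B ((0, y1, y2, y3), (0, 0, 0, 0)) ((0, y1, y2, y3), (0, 0, 0, 0)) = (norm y)\<^sup>2"
      by (simp add: B_coords y123 dot_square_norm[symmetric])
    then show "onorm p = 1"
      using y(3) unfolding p_def onorm_eq_B B_scaleR_left B_scaleR_right by (simp add: power2_eq_square)
  qed (simp_all add: Bp y)
qed

lemma isotropic_partner:
  assumes "u \<in> ImO" "onorm u = 0" "u \<noteq> 0" "p \<in> ImO" "onorm p = 1" "B p u = 0"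
  obtains r where "r \<in> ImO" "onorm r = 0" "B u r > 0" "B p r = 0"
proof -
  define Ju where "Ju = (fst u, - snd u)"
  define m where "m = B u Ju"
  have "m = fst u \<bullet> fst u + snd u \<bullet> snd u" by (simp add: m_def Ju_def B_inner)
  moreover have "fst u \<noteq> 0 \<or> snd u \<noteq> 0" using assms(3) by (simp add: prod_eq_iff)
  ultimately have m: "m > 0" by (auto simp: add_pos_nonneg add_nonneg_pos)
  define s where "s = Ju - B Ju p *\<^sub>R p"
  have us: "B u s = m" and ps: "B p s = 0"
    using assms(5,6) by (simp_all add: s_def m_def B_simps onorm_eq_B B_commute[of u p] B_commute[of p Ju])
  define r where "r = s - (onorm s / (2 * m)) *\<^sub>R u"
  show thesis
  proof (rule that[of r])
    show "r \<in> ImO" using assms(1,4) by (simp add: r_def s_def Ju_def ImO_iff ImO_diff ImO_scaleR)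
    show "onorm r = 0"
      using us assms(2) m by (simp add: r_def onorm_eq_B B_simps B_commute[of s u] field_simps)
    show "B u r > 0" using us assms(2) m by (simp add: r_def B_simps onorm_eq_B)
    show "B p r = 0" using ps assms(6) by (simp add: r_def B_simps)
  qed
qed

lemma isotropic_curve:
  assumes ImO: "u \<in> ImO" "v \<in> ImO" "p \<in> ImO" "r \<in> ImO"
    and norms: "onorm u = 0" "onorm v = 0" "onorm p = 1" "onorm r = 0"
    and orth: "B u v = 0" "B p u = 0" "B p v = 0" "B p r = 0" and m: "B u r > 0" and "t \<noteq> 0"
  defines "D \<equiv> (B u r)\<^sup>2 + (B v r)\<^sup>2"
  defines "w \<equiv> (u + (t * t * B u r / (2 * D)) *\<^sub>R r, v + t *\<^sub>R p - (t * t * B v r / (2 * D)) *\<^sub>R r)"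
  shows "w \<in> isocone" "Re (herm w w) \<noteq> 0"
proof -
  have D: "D > 0" using m by (simp add: D_def add_pos_nonneg)
  have "B v u = 0" "B u p = 0" "B v p = 0" "B r p = 0" "B r u = B u r" "B r v = B v r"
    using orth by (simp_all add: B_commute)
  note B_facts = norms[unfolded onorm_eq_B] orth this
  have fst_w: "onorm (fst w) = t * t * (B u r)\<^sup>2 / D"
    using D by (simp add: w_def onorm_eq_B B_simps B_facts power2_eq_square field_simps)
  have "onorm (snd w) = t * t * (D - (B v r)\<^sup>2) / D"
    using D by (simp add: w_def onorm_eq_B B_simps B_facts power2_eq_square field_simps)
  then have snd_w: "onorm (snd w) = t * t * (B u r)\<^sup>2 / D" by (simp add: D_def)
  have "B (fst w) (snd w) = 0"
    using D by (simp add: w_def B_simps B_facts field_simps)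
  moreover have "Re (herm w w) = 2 * t * t * (B u r)\<^sup>2 / D"
    using fst_w snd_w by (simp add: herm_self)
  moreover have "Re (herm w w) \<noteq> 0" using D m \<open>t \<noteq> 0\<close> calculation(2) by simp
  moreover have "w \<noteq> 0" using calculation(3) by (auto simp: herm_self onorm_eq_B B_simps)
  ultimately show "w \<in> isocone" "Re (herm w w) \<noteq> 0" using fst_w snd_w ImO
    by (simp_all add: isocone_iff w_def ImO_add ImO_diff ImO_scaleR)
qed

lemma perturb_isotropic_pair:
  assumes "u \<in> ImO" "v \<in> ImO" "onorm u = 0" "onorm v = 0" "B u v = 0" "u \<noteq> 0" "e > 0"
  obtains w where "w \<in> isocone" "dist w (u, v) < e" "Re (herm w w) \<noteq> 0"
proof -
  obtain p where p: "p \<in> ImO" "onorm p = 1" "B p u = 0" "B p v = 0"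
    using exists_unit_orthogonal .
  obtain r where r: "r \<in> ImO" "onorm r = 0" "B u r > 0" "B p r = 0"
    using isotropic_partner[OF assms(1,3,6) p(1,2,3)] .
  define D where "D = (B u r)\<^sup>2 + (B v r)\<^sup>2"
  have "D > 0" using r(3) by (simp add: D_def add_pos_nonneg)
  define c where "c t = (u + (t * t * B u r / (2 * D)) *\<^sub>R r, v + t *\<^sub>R p - (t * t * B v r / (2 * D)) *\<^sub>R r)"
    for t :: real
  have "isCont c 0" unfolding c_def using \<open>D > 0\<close> by (intro continuous_intros) simp_all
  then have "(c \<longlongrightarrow> (u, v)) (at 0)" by (simp add: isCont_def c_def)
  then have "eventually (\<lambda>t. dist (c t) (u, v) < e) (at 0)" using assms(7) by (rule tendstoD)
  then obtain d where "d > 0" "\<And>t. t \<noteq> 0 \<Longrightarrow> dist t 0 < d \<Longrightarrow> dist (c t) (u, v) < e"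
    unfolding eventually_at by auto
  then have "dist (c (d / 2)) (u, v) < e" "d / 2 \<noteq> 0" by simp_all
  moreover have "c (d / 2) \<in> isocone" "Re (herm (c (d / 2)) (c (d / 2))) \<noteq> 0"
    using isotropic_curve[OF assms(1,2) p(1) r(1) assms(3,4) p(2) r(2) assms(5) p(3,4) r(4,3)
        \<open>d / 2 \<noteq> 0\<close>] by (simp_all add: c_def D_def)
  ultimately show thesis using that by blast
qed

text \<open>Multiplication by \<open>i\<close>, \<open>(u, v) \<mapsto> (- v, u)\<close>, reduces the general case to \<open>u \<noteq> 0\<close>.\<close>
lemma isocone_perturbation:
  assumes "z \<in> isocone" "Re (herm z z) = 0" "e > 0"
  obtains w where "w \<in> isocone" "dist w z < e" "Re (herm w w) \<noteq> 0"
proof -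
  obtain u v where z: "z = (u, v)" by (rule prod.exhaust)
  have uv: "u \<in> ImO" "v \<in> ImO" "onorm u = onorm v" "B u v = 0" "u \<noteq> 0 \<or> v \<noteq> 0"
    using assms(1) by (simp_all add: isocone_iff z Pair_eq_0_iff)
  have "onorm u = 0" "onorm v = 0" using assms(2) uv(3) by (simp_all add: herm_self z)
  show thesis
  proof (cases "u = 0")
    case False
    obtain w where "w \<in> isocone" "dist w (u, v) < e" "Re (herm w w) \<noteq> 0"
      using perturb_isotropic_pair[OF uv(1,2) \<open>onorm u = 0\<close> \<open>onorm v = 0\<close> uv(4) False assms(3)] .
    then show thesis using that by (simp add: z)
  next
    case True
    then have "v \<noteq> 0" "B v u = 0" using uv(5) by (simp_all add: B_zero_right)
    obtain w where w: "w \<in> isocone" "dist w (v, u) < e" "Re (herm w w) \<noteq> 0"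
      using perturb_isotropic_pair[OF uv(2,1) \<open>onorm v = 0\<close> \<open>onorm u = 0\<close> \<open>B v u = 0\<close> \<open>v \<noteq> 0\<close> assms(3)] .
    obtain a b where wab: "w = (a, b)" by (rule prod.exhaust)
    have ab: "a \<in> ImO" "b \<in> ImO" "a \<noteq> 0 \<or> b \<noteq> 0" "onorm a = onorm b" "B a b = 0"
      using w(1) by (simp_all add: isocone_iff wab Pair_eq_0_iff)
    show thesis
    proof (rule that[of "(- b, a)"])
      show "(- b, a) \<in> isocone"
        using ab by (auto simp: isocone_iff ImO_minus Pair_eq_0_iff onorm_eq_B B_simps B_commute[of a b])
      show "dist (- b, a) z < e" using w(2) True by (simp add: z wab dist_norm norm_Pair add.commute)
      show "Re (herm (- b, a) (- b, a)) \<noteq> 0" using w(3) by (simp add: herm_self wab onorm_eq_B B_simps)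
    qed
  qed
qed

lemma not_openZ_orbit:
  assumes "z \<in> isocone" "Re (herm z z) = 0"
  shows "\<not> openZ (orbit SOe (cline z))"
proof
  assume "openZ (orbit SOe (cline z))"
  then have "openin (top_of_set isocone) {w \<in> isocone. cline w \<in> orbit SOe (cline z)}"
    by (simp add: openZ_def)
  then obtain e where "e > 0"
    and e: "\<And>w. w \<in> isocone \<Longrightarrow> dist w z < e \<Longrightarrow> cline w \<in> orbit SOe (cline z)"
    using assms(1) cline_in_orbit unfolding openin_euclidean_subtopology_iff by blast
  obtain w where w: "w \<in> isocone" "dist w z < e" "Re (herm w w) \<noteq> 0"
    using isocone_perturbation[OF assms \<open>e > 0\<close>] .
  obtain g where g: "g \<in> SOe" "cline w = actL g (cline z)"
    using e[OF w(1,2)] unfolding orbit_def by blast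
  have gO: "g \<in> Ogrp" using g(1) SOe_subset_Ogrp by blast
  have "cline w = cline (map_prod g g z)" using g(2) by (simp add: actL_cline Ogrp_linear[OF gO])
  then obtain k where "Re (herm w w) = k * Re (herm (map_prod g g z) (map_prod g g z))"
    using Re_herm_cline[OF w(1)] by blast
  then show False using w(3) assms(2) by (simp add: Ogrp_Re_herm[OF gO])
qed

lemma openZ_orbit_iff:
  assumes "Orb \<in> orbitsZ SOe"
  shows "openZ Orb \<longleftrightarrow> Orb = Dplus \<or> Orb = Dminus"
proof -
  obtain z where z: "z \<in> isocone" "Orb = orbit SOe (cline z)"
    using assms by (auto simp: orbitsZ_def Zq_def)
  consider "Re (herm z z) > 0" | "Re (herm z z) < 0" | "Re (herm z z) = 0" by linarith
  then show ?thesis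
  proof cases
    case 1
    then have "Orb = Dplus"
      using z cline_in_Dsign_iff[of z 1] orbit_SOe_Dplus by (simp add: Dplus_eq_Dsign)
    then show ?thesis by (simp add: Dplus_eq_Dsign openZ_Dsign)
  next
    case 2
    then have "Orb = Dminus"
      using z cline_in_Dsign_iff[of z "-1"] orbit_SOe_Dminus by (simp add: Dminus_eq_Dsign)
    then show ?thesis by (simp add: Dminus_eq_Dsign openZ_Dsign)
  next
    case 3
    then have "cline z \<notin> Dplus" "cline z \<notin> Dminus"
      using cline_in_Dsign_iff[OF z(1)] by (simp_all add: Dplus_eq_Dsign Dminus_eq_Dsign)
    then have "Orb \<noteq> Dplus" "Orb \<noteq> Dminus" using cline_in_orbit z(2) by blast+
    then show ?thesis using not_openZ_orbit[OF z(1) 3] z(2) by simp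
  qed
qed

theorem claim3p5:
  shows "Dplus \<noteq> Dminus
    \<and> Dplus \<in> orbitsZ SOe \<and> Dminus \<in> orbitsZ SOe
    \<and> (\<forall>Orb \<in> orbitsZ SOe. openZ Orb \<longleftrightarrow> Orb = Dplus \<or> Orb = Dminus)
    \<and> (\<forall>g \<in> G0. \<forall>L \<in> Dplus. actL g L \<in> Dplus)
    \<and> (\<forall>L \<in> Dplus. \<forall>L' \<in> Dplus. \<exists>g \<in> G0. actL g L = L')
    \<and> (\<forall>g \<in> G0. \<forall>L \<in> Dminus. actL g L \<in> Dminus)
    \<and> (\<forall>L \<in> Dminus. \<forall>L' \<in> Dminus. \<exists>g \<in> G0. actL g L = L')"
proof (intro conjI ballI)
  show "Dplus \<noteq> Dminus" using base_point_Dplus Dplus_Int_Dminus by blast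
  show "Dplus \<in> orbitsZ SOe" "Dminus \<in> orbitsZ SOe"
    using base_point_Dplus base_point_Dminus orbit_SOe_Dplus orbit_SOe_Dminus Dsign_subset_Zq
    unfolding orbitsZ_def Dplus_eq_Dsign Dminus_eq_Dsign by blast+
  show "openZ Orb \<longleftrightarrow> Orb = Dplus \<or> Orb = Dminus" if "Orb \<in> orbitsZ SOe" for Orb
    using that by (rule openZ_orbit_iff)
  show "actL g L \<in> Dplus" if "g \<in> G0" "L \<in> Dplus" for g L
    using that Ogrp_Dsign G0_subset_Ogrp unfolding Dplus_eq_Dsign by blast
  show "actL g L \<in> Dminus" if "g \<in> G0" "L \<in> Dminus" for g L
    using that Ogrp_Dsign G0_subset_Ogrp unfolding Dminus_eq_Dsign by blast
  show "\<exists>g \<in> G0. actL g L = L'" if "L \<in> Dplus" "L' \<in> Dplus" for L L'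
    using Dplus_transitive[OF that] by (auto simp: G0e_def)
  show "\<exists>g \<in> G0. actL g L = L'" if "L \<in> Dminus" "L' \<in> Dminus" for L L'
    using Dminus_transitive[OF that] by (auto simp: G0e_def)
qed

end
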